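(* For any $d\ge1$, $K\ge2$ and any $\mathbf W\in\mathrm{OB}(d,K)$, $$\frac{\rho_{\text{one-vs-one}}(\mathbf W)^2}{2}\le\rho_{\text{one-vs-rest}}(\mathbf W)\le\rho_{\text{one-vs-one}}(\mathbf W).$$
   Context: $\mathrm{OB}(d,K)$ is the set of real $d\times K$ matrices with unit-norm columns $\mathbf w_1,\dots,\mathbf w_K$. $\operatorname{dist}(\mathbf v,\mathcal W)=\inf\{\|\mathbf v-\mathbf w\|_2:\mathbf w\in\operatorname{conv}(\mathcal W)\}$; $\rho_{\text{one-vs-rest}}(\mathbf W)=\min_k\operatorname{dist}(\mathbf w_k,\{\mathbf w_j\}_{j\ne k})$; $\rho_{\text{one-vs-one}}(\mathbf W)=\min_k\min_{k'\ne k}\|\mathbf w_k-\mathbf w_{k'}\|_2$. *)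

theory Defs
  imports "HOL-Analysis.Analysis"
begin

text \<open>Oblique manifold OB(d,K): real d x K matrices (d = CARD('d), K = CARD('k))
  whose columns have unit Euclidean norm.\<close>
definition oblique :: "real^'k^'d \<Rightarrow> bool" where
  "oblique W \<longleftrightarrow> (\<forall>k. norm (column k W) = 1)"

definition dist_hull :: "'a::real_normed_vector \<Rightarrow> 'a set \<Rightarrow> real" where
  "dist_hull v S = Inf {norm (v - w) | w. w \<in> convex hull S}"

definition rho_one_vs_rest :: "real^'k^'d \<Rightarrow> real" where
  "rho_one_vs_rest W =
     Min ((\<lambda>k. dist_hull (column k W) {column j W | j. j \<noteq> k}) ` UNIV)"

definition rho_one_vs_one :: "real^'k^'d \<Rightarrow> real" where
  "rho_one_vs_one W =
     Min ((\<lambda>(k, k'). norm (column k W - column k' W)) ` {(k, k'). k' \<noteq> k})"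

end

theory Submission
  imports Defs
begin

text \<open>The upper bound holds because each other column is itself a point of the convex
  hull of the remaining columns. For the lower bound, let \<open>\<rho>\<close> be the least distance between two
  columns. Unit vectors at distance \<open>\<ge> \<rho>\<close> from the unit vector \<open>v\<close> satisfy
  \<open>\<langle>v, s\<rangle> = 1 - \<parallel>v - s\<parallel>\<^sup>2/2 \<le> 1 - \<rho>\<^sup>2/2\<close>; this linear bound persists on their convex hull, and
  Cauchy-Schwarz turns \<open>\<langle>v, v - w\<rangle> \<ge> \<rho>\<^sup>2/2\<close> into \<open>\<parallel>v - w\<parallel> \<ge> \<rho>\<^sup>2/2\<close>.\<close>

lemma ex_neq_of_card_ge_2:
  fixes k :: "'k::finite"
  assumes "CARD('k) \<ge> 2"
  shows "\<exists>j. j \<noteq> k"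
proof (rule ccontr)
  assume "\<nexists>j. j \<noteq> k"
  then have "(UNIV :: 'k set) = {k}" by auto
  then have "CARD('k) = 1" by (metis card.empty card.insert empty_iff finite.emptyI One_nat_def)
  then show False using assms by simp
qed

lemma dist_hull_le:
  assumes "w \<in> convex hull S"
  shows "dist_hull v S \<le> norm (v - w)"
  unfolding dist_hull_def using assms
  by (intro cInf_lower) (auto intro: bdd_belowI[where m = 0])

lemma dist_hull_greatest:
  assumes "S \<noteq> {}" and "\<And>w. w \<in> convex hull S \<Longrightarrow> c \<le> norm (v - w)"
  shows "c \<le> dist_hull v S"
  unfolding dist_hull_def using assms hull_subset[of S convex]
  by (intro cInf_greatest) auto

lemma inner_le_on_convex_hull:
  fixes v :: "'a::real_inner"
  assumes "\<And>s. s \<in> S \<Longrightarrow> inner v s \<le> c" and "w \<in> convex hull S"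
  shows "inner v w \<le> c"
proof -
  have "convex hull S \<subseteq> {x. inner v x \<le> c}"
    using assms(1) convex_halfspace_le by (intro hull_minimal) auto
  then show ?thesis using assms(2) by auto
qed

lemma inner_unit_vectors_eq:
  fixes v s :: "'a::real_inner"
  assumes "norm v = 1" and "norm s = 1"
  shows "inner v s = 1 - (norm (v - s))\<^sup>2 / 2"
  using assms
  by (simp add: power2_norm_eq_inner inner_diff inner_commute norm_eq_1 diff_divide_distrib)

lemma half_sq_le_norm_diff_convex_hull_unit:
  fixes v :: "'a::real_inner"
  assumes v: "norm v = 1" and r: "0 \<le> r"
    and S: "\<And>s. s \<in> S \<Longrightarrow> norm s = 1 \<and> r \<le> norm (v - s)"
    and w: "w \<in> convex hull S"
  shows "r\<^sup>2 / 2 \<le> norm (v - w)"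
proof -
  have "inner v s \<le> 1 - r\<^sup>2 / 2" if "s \<in> S" for s
  proof -
    have "r\<^sup>2 \<le> (norm (v - s))\<^sup>2" using S[OF that] r by (simp add: power_mono)
    then show ?thesis using inner_unit_vectors_eq[OF v] S[OF that] by simp
  qed
  then have "inner v w \<le> 1 - r\<^sup>2 / 2" using w by (rule inner_le_on_convex_hull)
  moreover have "inner v (v - w) = 1 - inner v w"
    using v by (simp add: inner_diff power2_norm_eq_inner[symmetric])
  moreover have "inner v (v - w) \<le> norm (v - w)"
    using norm_cauchy_schwarz[of v "v - w"] v by simp
  ultimately show ?thesis by simp
qed

lemma rho_one_vs_one_le:
  assumes "k' \<noteq> k"
  shows "rho_one_vs_one W \<le> norm (column k W - column k' W)"
  unfolding rho_one_vs_one_def using assms by (intro Min_le) auto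

lemma rho_one_vs_one_attained:
  fixes W :: "real^'k^'d"
  assumes "CARD('k) \<ge> 2"
  obtains k k' where "k' \<noteq> k" and "rho_one_vs_one W = norm (column k W - column k' W)"
proof -
  obtain k k' :: 'k where "k' \<noteq> k" using ex_neq_of_card_ge_2[OF assms] by blast
  then have "rho_one_vs_one W \<in> (\<lambda>(k, k'). norm (column k W - column k' W)) ` {(k, k'). k' \<noteq> k}"
    unfolding rho_one_vs_one_def by (intro Min_in) auto
  then show ?thesis using that by auto
qed

lemma rho_one_vs_rest_le:
  "rho_one_vs_rest W \<le> dist_hull (column k W) {column j W | j. j \<noteq> k}"
  unfolding rho_one_vs_rest_def by (intro Min_le) auto

lemma rho_one_vs_rest_greatest:
  assumes "\<And>k. c \<le> dist_hull (column k W) {column j W | j. j \<noteq> k}"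
  shows "c \<le> rho_one_vs_rest W"
  unfolding rho_one_vs_rest_def using assms by (subst Min_ge_iff) auto

theorem mainTheorem15:
  fixes W :: "real^'k^'d"
  assumes "CARD('k) \<ge> 2"
    and "oblique W"
  shows "(rho_one_vs_one W)\<^sup>2 / 2 \<le> rho_one_vs_rest W
         \<and> rho_one_vs_rest W \<le> rho_one_vs_one W"
proof
  have unit: "norm (column k W) = 1" for k using assms(2) by (simp add: oblique_def)
  obtain k\<^sub>0 k\<^sub>0' where "k\<^sub>0' \<noteq> k\<^sub>0" and \<rho>: "rho_one_vs_one W = norm (column k\<^sub>0 W - column k\<^sub>0' W)"
    using rho_one_vs_one_attained[OF assms(1)] .
  show "(rho_one_vs_one W)\<^sup>2 / 2 \<le> rho_one_vs_rest W"
  proof (rule rho_one_vs_rest_greatest, rule dist_hull_greatest)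
    fix k :: 'k
    obtain j where "j \<noteq> k" using ex_neq_of_card_ge_2[OF assms(1)] by blast
    then show "{column j W | j. j \<noteq> k} \<noteq> {}" by blast
    show "(rho_one_vs_one W)\<^sup>2 / 2 \<le> norm (column k W - w)"
      if "w \<in> convex hull {column j W | j. j \<noteq> k}" for w
    proof (rule half_sq_le_norm_diff_convex_hull_unit[OF unit _ _ that])
      show "0 \<le> rho_one_vs_one W" using \<rho> by simp
      show "norm s = 1 \<and> rho_one_vs_one W \<le> norm (column k W - s)"
        if "s \<in> {column j W | j. j \<noteq> k}" for s
        using that unit rho_one_vs_one_le by blast
    qed
  qed
  have "rho_one_vs_rest W \<le> dist_hull (column k\<^sub>0 W) {column j W | j. j \<noteq> k\<^sub>0}"
    by (rule rho_one_vs_rest_le)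
  also have "\<dots> \<le> norm (column k\<^sub>0 W - column k\<^sub>0' W)"
    using \<open>k\<^sub>0' \<noteq> k\<^sub>0\<close> by (intro dist_hull_le hull_inc) blast
  finally show "rho_one_vs_rest W \<le> rho_one_vs_one W"
    using \<rho> by simp
qed

end
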